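(* Consider an unweighted ESP instance on $G=(V,E)$, $|V|=n$, root $r$. For each $k\in\{1,\dots,n\}$ let $T_k$ be the tree returned by Garg's 2-approximation algorithm for the rooted $k$-MST problem (a subtree of $G$ containing $r$ with exactly $k$ vertices whose length $\ell(T_k)=\sum_{e\in E(T_k)}\ell_e$ is at most twice the minimum length of such a tree), where $T_1=(\{r\},\emptyset)$. Let $H$ be the directed graph with vertex set $\{1,\dots,n\}$, arcs $(i,j)$ for all $i<j$, and arc costs $c_{i,j}=(n-i)\,\ell(T_j)$. Let $P=(n_0,n_1,\dots,n_l)$ with $n_0=1$, $n_l=n$ be a shortest $(1,n)$-path in $H$, and let $\sigma_{\mathrm{Alg}}$ be the expanding search pattern built in $l$ phases, where in phase $j\in\{1,\dots,l\}$ the edges of $T_{n_j}$ having fewer than two endpoints in $\bigcup_{i=0}^{j-1}V(T_{n_i})$ are appended in an order such that the set of explored vertices stays connected (edges both of whose endpoints are already explored being skipped). Then $L(\sigma_{\mathrm{Alg}})\le z$, where $z$ is the cost of a shortest $(1,n)$-path in $H$.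
   Context: Unweighted ESP: connected undirected graph $G=(V,E)$, root $r\in V$, edge lengths $\ell_e\in\mathbb{Z}_{>0}$, all vertex weights $w_v=1$. An expanding search pattern is a sequence of edges $\sigma=(e_1,\dots,e_m)$ with $r\in e_1$ such that $\{e_1,\dots,e_i\}$ forms a tree in $G$ for every $i$. For $v\ne r$ visited by $\sigma$, $k_v=\min\{i:v\in e_i\}$, $k_r=0$, latency $L_v(\sigma)=\sum_{i=1}^{k_v}\ell_{e_i}$; total latency $L(\sigma)=\sum_{v\in V}L_v(\sigma)$. The cost of a path in $H$ is the sum of its arc costs. *)

theory Defs
  imports Main
begin

definition adj :: "'a set set \<Rightarrow> 'a \<Rightarrow> 'a \<Rightarrow> bool" where
  "adj F u v \<longleftrightarrow> {u, v} \<in> F"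

definition simple_graph :: "'a set \<Rightarrow> 'a set set \<Rightarrow> bool" where
  "simple_graph V E \<longleftrightarrow> finite V \<and> (\<forall>e\<in>E. e \<subseteq> V \<and> card e = 2)"

definition graph_connected :: "'a set \<Rightarrow> 'a set set \<Rightarrow> bool" where
  "graph_connected V E \<longleftrightarrow> (\<forall>u\<in>V. \<forall>v\<in>V. (adj E)\<^sup>*\<^sup>* u v)"

definition is_tree :: "'a set \<Rightarrow> 'a set set \<Rightarrow> bool" where
  "is_tree W F \<longleftrightarrow> finite W \<and> (\<forall>e\<in>F. e \<subseteq> W) \<and> graph_connected W F \<and>
     (\<forall>e\<in>F. \<forall>u v. e = {u, v} \<longrightarrow> \<not> (adj (F - {e}))\<^sup>*\<^sup>* u v)"

definition rooted_subtree :: "'a set \<Rightarrow> 'a set set \<Rightarrow> 'a \<Rightarrow> 'a set \<Rightarrow> 'a set set \<Rightarrow> bool" where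
  "rooted_subtree V E r W F \<longleftrightarrow> W \<subseteq> V \<and> F \<subseteq> E \<and> r \<in> W \<and> is_tree W F"

definition tree_len :: "('a set \<Rightarrow> nat) \<Rightarrow> 'a set set \<Rightarrow> nat" where
  "tree_len len F = (\<Sum>e\<in>F. len e)"

definition expanding_search :: "'a set set \<Rightarrow> 'a \<Rightarrow> 'a set list \<Rightarrow> bool" where
  "expanding_search E r \<sigma> \<longleftrightarrow> set \<sigma> \<subseteq> E \<and> distinct \<sigma> \<and>
     (\<sigma> \<noteq> [] \<longrightarrow> r \<in> hd \<sigma>) \<and>
     (\<forall>i\<in>{1..length \<sigma>}. is_tree (\<Union> (set (take i \<sigma>))) (set (take i \<sigma>)))"

(* latency of vertex v: k_r = 0; otherwise k_v = min{i. v \<in> e_i} (1-based),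
   L_v = sum of lengths of e_1..e_{k_v} *)
definition vertex_latency :: "('a set \<Rightarrow> nat) \<Rightarrow> 'a \<Rightarrow> 'a set list \<Rightarrow> 'a \<Rightarrow> nat" where
  "vertex_latency len r \<sigma> v =
     (if v = r then 0
      else sum_list (map len (take (Suc (LEAST i. i < length \<sigma> \<and> v \<in> \<sigma> ! i)) \<sigma>)))"

definition total_latency :: "'a set \<Rightarrow> ('a set \<Rightarrow> nat) \<Rightarrow> 'a \<Rightarrow> 'a set list \<Rightarrow> nat" where
  "total_latency V len r \<sigma> = (\<Sum>v\<in>V. vertex_latency len r \<sigma> v)"

definition H_path :: "nat \<Rightarrow> nat list \<Rightarrow> bool" where
  "H_path n P \<longleftrightarrow> P \<noteq> [] \<and> hd P = 1 \<and> last P = n \<and> sorted_wrt (<) P"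

definition H_cost :: "nat \<Rightarrow> (nat \<Rightarrow> nat) \<Rightarrow> nat list \<Rightarrow> nat" where
  "H_cost n lenT P = (\<Sum>j\<in>{1..<length P}. (n - P ! (j - 1)) * lenT (P ! j))"

end

theory Submission
  imports Defs
begin

(* Let X_j be the set of vertices explored after the first j phases, together with r.
   By induction on j, X_j contains V(T_{n_j}): each edge of T_{n_j} lies inside an earlier tree,
   is appended in phase j, or is skipped because both its endpoints are already explored.
   A vertex v first explored in phase j has latency at most l(T_{n_1}) + ... + l(T_{n_j}), and
   it lies outside V(T_{n_(i-1)}) for every i <= j.  Summing over v, the length l(T_{n_i}) is
   charged to at most n - n_(i-1) vertices, which is the cost of the arc (n_(i-1), n_i) of H. *)

lemma graph_connected_subset_insert_Union:
  assumes "graph_connected W F" "r \<in> W"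
  shows "W \<subseteq> insert r (\<Union> F)"
proof
  fix w assume "w \<in> W"
  with assms have "(adj F)\<^sup>*\<^sup>* r w" by (simp add: graph_connected_def)
  then show "w \<in> insert r (\<Union> F)"
    by (cases rule: rtranclp.cases) (auto simp: adj_def)
qed

lemma vertex_latency_append_le:
  fixes len :: "'a set \<Rightarrow> nat"
  assumes "v \<noteq> r" "v \<in> \<Union> (set xs)"
  shows "vertex_latency len r (xs @ ys) v \<le> sum_list (map len xs)"
proof -
  obtain i where i: "i < length xs" "v \<in> xs ! i"
    using assms(2) by (metis UnionE in_set_conv_nth)
  let ?k = "LEAST i. i < length (xs @ ys) \<and> v \<in> (xs @ ys) ! i"
  have "?k \<le> i" using i by (intro Least_le) (simp add: nth_append)
  then have "vertex_latency len r (xs @ ys) v = sum_list (map len (take (Suc ?k) xs))"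
    using i assms(1) unfolding vertex_latency_def by simp
  also have "\<dots> \<le> sum_list (map len (take (Suc ?k) xs @ drop (Suc ?k) xs))"
    by (simp only: map_append sum_list_append le_add1)
  also have "\<dots> = sum_list (map len xs)" by simp
  finally show ?thesis .
qed

lemma sum_list_map_concat:
  "sum_list (map f (concat xss)) = (\<Sum>i<length xss. sum_list (map f (xss ! i)))"
  by (induction xss) (simp_all add: sum.lessThan_Suc_shift del: sum.lessThan_Suc)

lemma sum_list_nth_concat_le_sum:
  fixes f :: "'a \<Rightarrow> 'b :: canonically_ordered_monoid_add"
  assumes "distinct (concat xss)" "i < length xss" "set (xss ! i) \<subseteq> A" "finite A"
  shows "sum_list (map f (xss ! i)) \<le> sum f A"
  using assms by (simp add: distinct_concat_iff sum_list_distinct_conv_sum_set sum_mono2)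

definition explored :: "'a \<Rightarrow> 'a set list list \<Rightarrow> nat \<Rightarrow> 'a set" where
  "explored r phases j = insert r (\<Union> (set (concat (take j phases))))"

lemma explored_mono: "i \<le> j \<Longrightarrow> explored r phases i \<subseteq> explored r phases j"
  unfolding explored_def using set_take_subset_set_take by fastforce

lemma phase_subset_explored:
  "j < length phases \<Longrightarrow> \<Union> (set (phases ! j)) \<subseteq> explored r phases (Suc j)"
  by (auto simp: explored_def take_Suc_conv_app_nth)

lemma vertex_latency_concat_le:
  fixes len :: "'a set \<Rightarrow> nat"
  assumes "v \<noteq> r" "v \<in> \<Union> (set (concat phases))"
  shows "vertex_latency len r (concat phases) v \<le>
    (\<Sum>i<length phases. if v \<in> explored r phases i then 0 else sum_list (map len (phases ! i)))"
proof -
  obtain k where k: "k < length phases" "\<forall>i\<le>k. v \<notin> explored r phases i"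
    "v \<in> explored r phases (Suc k)"
    using ex_least_nat_less[of "\<lambda>i. v \<in> explored r phases i" "length phases"] assms
    by (auto simp: explored_def)
  let ?pre = "concat (take (Suc k) phases)"
  have "vertex_latency len r (?pre @ concat (drop (Suc k) phases)) v \<le> sum_list (map len ?pre)"
    using k(3) assms(1) by (intro vertex_latency_append_le) (auto simp: explored_def)
  also have "sum_list (map len ?pre) = (\<Sum>i<Suc k. sum_list (map len (phases ! i)))"
    using k(1) by (simp add: sum_list_map_concat min_absorb2)
  also have "\<dots> = (\<Sum>i<Suc k. if v \<in> explored r phases i then 0 else sum_list (map len (phases ! i)))"
    using k(2) by (intro sum.cong) auto
  also have "\<dots> \<le> (\<Sum>i<length phases. if v \<in> explored r phases i then 0 else sum_list (map len (phases ! i)))"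
    using k(1) by (intro sum_mono2) auto
  finally show ?thesis by (metis append_take_drop_id concat_append)
qed

lemma vertex_latency_concat_le_uncovered:
  fixes len :: "'a set \<Rightarrow> nat" and c :: "nat \<Rightarrow> nat" and W :: "nat \<Rightarrow> 'a set"
  assumes "v \<in> explored r phases (length phases)"
    and "\<forall>i<length phases. W i \<subseteq> explored r phases i"
    and "\<forall>i<length phases. sum_list (map len (phases ! i)) \<le> c i"
  shows "vertex_latency len r (concat phases) v \<le> (\<Sum>i<length phases. if v \<in> W i then 0 else c i)"
proof (cases "v = r")
  case True then show ?thesis by (simp add: vertex_latency_def)
next
  case False
  then have "v \<in> \<Union> (set (concat phases))" using assms(1) by (simp add: explored_def)
  with False have "vertex_latency len r (concat phases) v \<le>
      (\<Sum>i<length phases. if v \<in> explored r phases i then 0 else sum_list (map len (phases ! i)))"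
    by (rule vertex_latency_concat_le)
  also have "\<dots> \<le> (\<Sum>i<length phases. if v \<in> W i then 0 else c i)"
    using assms(2,3) by (intro sum_mono) auto
  finally show ?thesis .
qed

lemma sum_le_sum_card_uncovered:
  fixes f :: "'a \<Rightarrow> nat" and c :: "'i \<Rightarrow> nat"
  assumes "finite V" "\<forall>i\<in>I. W i \<subseteq> V"
    and "\<forall>v\<in>V. f v \<le> (\<Sum>i\<in>I. if v \<in> W i then 0 else c i)"
  shows "(\<Sum>v\<in>V. f v) \<le> (\<Sum>i\<in>I. (card V - card (W i)) * c i)"
proof -
  have "(\<Sum>v\<in>V. f v) \<le> (\<Sum>v\<in>V. \<Sum>i\<in>I. if v \<in> W i then 0 else c i)"
    using assms(3) by (intro sum_mono) blast
  also have "\<dots> = (\<Sum>i\<in>I. \<Sum>v\<in>V. if v \<in> W i then 0 else c i)"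
    by (rule sum.swap)
  also have "\<dots> = (\<Sum>i\<in>I. (card V - card (W i)) * c i)"
  proof (rule sum.cong)
    fix i assume "i \<in> I"
    then have "W i \<subseteq> V" using assms(2) by blast
    then show "(\<Sum>v\<in>V. if v \<in> W i then 0 else c i) = (card V - card (W i)) * c i"
      using assms(1) by (simp add: sum.If_cases Diff_eq[symmetric] card_Diff_subset finite_subset)
  qed simp
  finally show ?thesis .
qed

lemma trees_subset_explored:
  fixes W :: "nat \<Rightarrow> 'a set" and F :: "nat \<Rightarrow> 'a set set"
  assumes first: "W 0 \<subseteq> {r}"
    and connected: "\<forall>j\<in>{1..length phases}. graph_connected (W j) (F j) \<and> r \<in> W j"
    and skipped: "\<forall>j\<in>{1..length phases}. \<forall>e\<in>F j.
      \<not> e \<subseteq> (\<Union>i<j. W i) \<and> e \<notin> set (phases ! (j - 1)) \<longrightarrow> e \<subseteq> explored r phases j"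
    and "j \<le> length phases"
  shows "W j \<subseteq> explored r phases j"
  using \<open>j \<le> length phases\<close>
proof (induction j rule: less_induct)
  case (less j)
  show ?case
  proof (cases "j = 0")
    case True then show ?thesis using first by (simp add: explored_def)
  next
    case False
    then have j: "j \<in> {1..length phases}" using less.prems by simp
    have "e \<subseteq> explored r phases j" if e: "e \<in> F j" for e
    proof -
      have "\<not> e \<subseteq> (\<Union>i<j. W i) \<and> e \<notin> set (phases ! (j - 1)) \<longrightarrow> e \<subseteq> explored r phases j"
        using skipped j e by blast
      then consider "e \<subseteq> (\<Union>i<j. W i)" | "e \<in> set (phases ! (j - 1))" | "e \<subseteq> explored r phases j"
        by blast
      then show ?thesis
      proof cases
        case 1
        have "W i \<subseteq> explored r phases j" if "i < j" for i
        proof -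
          have "W i \<subseteq> explored r phases i" using less.IH less.prems that by simp
          also have "\<dots> \<subseteq> explored r phases j" using that by (simp add: explored_mono)
          finally show ?thesis .
        qed
        with 1 show ?thesis by blast
      next
        case 2
        have "j - 1 < length phases" using j by auto
        then have "\<Union> (set (phases ! (j - 1))) \<subseteq> explored r phases j"
          using phase_subset_explored[of "j - 1" phases r] False by simp
        with Union_upper[OF 2] show ?thesis by (rule order_trans)
      next
        case 3
        then show ?thesis .
      qed
    qed
    moreover have "r \<in> explored r phases j" by (simp add: explored_def)
    moreover have "W j \<subseteq> insert r (\<Union> (F j))"
      using connected j by (simp add: graph_connected_subset_insert_Union)
    ultimately show ?thesis by blast
  qed
qed

lemma H_path_nth_bounds:
  assumes "H_path n P" "i < length P"
  shows "1 \<le> P ! i \<and> P ! i \<le> n"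
proof -
  have "sorted P" "P \<noteq> []" "hd P = 1" "last P = n"
    using assms(1) strict_sorted_imp_sorted by (auto simp: H_path_def)
  then show ?thesis
    using assms(2) sorted_nth_mono[of P 0 i] sorted_nth_mono[of P i "length P - 1"]
    by (simp add: hd_conv_nth last_conv_nth)
qed

lemma H_cost_conv_sum_lessThan:
  "H_cost n lenT P = (\<Sum>i<length P - 1. (n - P ! i) * lenT (P ! Suc i))"
proof -
  have "{1..<length P} = Suc ` {..<length P - 1}"
    by (cases P) (simp_all add: lessThan_atLeast0)
  then show ?thesis by (simp add: H_cost_def sum.reindex)
qed

theorem lemma2:
  fixes V :: "'a set" and E :: "'a set set" and r :: 'a and len :: "'a set \<Rightarrow> nat"
    and n :: nat and T :: "nat \<Rightarrow> 'a set \<times> 'a set set"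
    and P :: "nat list" and phases :: "'a set list list" and \<sigma> :: "'a set list"
  assumes G: "simple_graph V E" and conn: "graph_connected V E" and root: "r \<in> V"
    and pos: "\<forall>e\<in>E. len e > 0"
    and n_def: "n = card V"
    and T_tree: "\<forall>k\<in>{1..n}. rooted_subtree V E r (fst (T k)) (snd (T k)) \<and> card (fst (T k)) = k"
    and T_approx: "\<forall>k\<in>{1..n}. \<forall>W F. rooted_subtree V E r W F \<and> card W = k \<longrightarrow>
                      tree_len len (snd (T k)) \<le> 2 * tree_len len F"
    and T_1: "T 1 = ({r}, {})"
    and P_path: "H_path n P"
    and P_short: "\<forall>Q. H_path n Q \<longrightarrow> H_cost n (\<lambda>k. tree_len len (snd (T k))) P
                                    \<le> H_cost n (\<lambda>k. tree_len len (snd (T k))) Q"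
    and phases_len: "length phases = length P - 1"
    and \<sigma>_def: "\<sigma> = concat phases"
    and \<sigma>_esp: "expanding_search E r \<sigma>"
    and phase_edges: "\<forall>j\<in>{1..<length P}. \<forall>e\<in>set (phases ! (j - 1)).
        e \<in> snd (T (P ! j)) \<and> \<not> e \<subseteq> (\<Union>i<j. fst (T (P ! i)))"
    and phase_skipped: "\<forall>j\<in>{1..<length P}. \<forall>e\<in>snd (T (P ! j)).
        \<not> e \<subseteq> (\<Union>i<j. fst (T (P ! i))) \<and> e \<notin> set (phases ! (j - 1)) \<longrightarrow>
        e \<subseteq> insert r (\<Union> (set (concat (take j phases))))"
  shows "total_latency V len r \<sigma> \<le> H_cost n (\<lambda>k. tree_len len (snd (T k))) P"
proof -
  define m where "m = length phases"
  define W where "W i = fst (T (P ! i))" for i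
  define c where "c i = tree_len len (snd (T (P ! i)))" for i
  have finV: "finite V" and finE: "finite E"
    using G finite_subset[of E "Pow V"] by (auto simp: simple_graph_def)
  have lenP: "length P = Suc m" using P_path phases_len by (simp add: H_path_def m_def)
  have T_P: "rooted_subtree V E r (W i) (snd (T (P ! i))) \<and> card (W i) = P ! i" if "i \<le> m" for i
    using T_tree H_path_nth_bounds[OF P_path, of i] that lenP by (auto simp: W_def)
  have W_explored: "W i \<subseteq> explored r phases i" if "i \<le> m" for i
  proof (rule trees_subset_explored[where F = "\<lambda>j. snd (T (P ! j))"])
    show "W 0 \<subseteq> {r}" using P_path T_1 by (simp add: W_def H_path_def flip: hd_conv_nth)
    show "\<forall>j\<in>{1..length phases}. graph_connected (W j) (snd (T (P ! j))) \<and> r \<in> W j"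
      using T_P by (auto simp: m_def rooted_subtree_def is_tree_def)
    show "\<forall>j\<in>{1..length phases}. \<forall>e\<in>snd (T (P ! j)).
        \<not> e \<subseteq> (\<Union>i<j. W i) \<and> e \<notin> set (phases ! (j - 1)) \<longrightarrow> e \<subseteq> explored r phases j"
      using phase_skipped lenP by (auto simp: W_def explored_def m_def)
  qed (use that m_def in simp)
  have W_last: "W m = V"
    using T_P[of m] P_path lenP n_def finV
    by (intro card_subset_eq) (auto simp: rooted_subtree_def H_path_def last_conv_nth)
  have phase_cost: "sum_list (map len (phases ! i)) \<le> c (Suc i)" if "i < m" for i
    unfolding c_def tree_len_def
    using \<sigma>_esp \<sigma>_def phase_edges[rule_format, of "Suc i"] T_P[of "Suc i"] finE that lenP
    by (intro sum_list_nth_concat_le_sum)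
      (auto simp: expanding_search_def rooted_subtree_def m_def intro: finite_subset)
  have "\<forall>v\<in>V. vertex_latency len r \<sigma> v \<le> (\<Sum>i<m. if v \<in> W i then 0 else c (Suc i))"
    using vertex_latency_concat_le_uncovered[of _ r phases W len "\<lambda>i. c (Suc i)"]
      W_explored[of m] W_last W_explored phase_cost \<sigma>_def by (auto simp: m_def)
  then have "total_latency V len r \<sigma> \<le> (\<Sum>i<m. (card V - card (W i)) * c (Suc i))"
    unfolding total_latency_def
    using T_P finV by (intro sum_le_sum_card_uncovered) (auto simp: rooted_subtree_def)
  also have "\<dots> = H_cost n (\<lambda>k. tree_len len (snd (T k))) P"
    using T_P lenP by (simp add: H_cost_conv_sum_lessThan n_def c_def)
  finally show ?thesis .
qed

end
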